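(* Let $G$ be an undirected, weighted, connected graph on vertices $1,\dots,n$, and let $H$ be either its adjacency matrix or its Laplacian matrix. Write $H=Q^T\Lambda Q$ with $Q$ a real orthogonal matrix and $\Lambda=\mathrm{diag}(\lambda_1,\dots,\lambda_n)$, $\lambda_1\le\cdots\le\lambda_n$. For real $t$ let $p(t)=|\langle s|e^{itH}|r\rangle|^2$ be the fidelity of state transfer from a sender vertex $s$ to a receiver vertex $r$, and suppose there is perfect state transfer at time $t_0$, i.e. $p(t_0)=1$. For $j=1,\dots,n$ let $q_{j}$ denote the $(j,s)$ entry of $Q$ (the $s$-th entry of the $j$-th orthonormal eigenvector of $H$). Let $h\in\mathbb{R}$ satisfy $|h|<\frac{\pi}{\lambda_n-\lambda_1}$. Then for every $\sigma\in\mathbb{R}$, \[ p(t_0+h)\ \ge\ 1-h^2\sum_{j=1}^n q_{j}^2(\lambda_j-\sigma)^2 . \]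
   Context: For a weighted graph with edge weights $w(j,k)$, the adjacency matrix $A=[a_{jk}]$ has $a_{jk}=w(j,k)$ if $j,k$ are adjacent and $a_{jk}=0$ otherwise; the Laplacian is $L=R-A$ where $R$ is the diagonal matrix of row sums of $A$. $\{|1\rangle,\dots,|n\rangle\}$ is the standard basis of $\mathbb{C}^n$, so $\langle s|e^{itH}|r\rangle$ is the $(s,r)$ entry of $e^{itH}$. *)

theory Defs
  imports Complex_Main "Jordan_Normal_Form.Matrix"
begin

text \<open>Vertices 1..n of the paper are represented by 0..n-1.
  A weighted undirected graph: symmetric irreflexive adjacency relation on the
  vertex set with symmetric positive edge weights.\<close>

definition weighted_graph :: "nat \<Rightarrow> (nat \<Rightarrow> nat \<Rightarrow> bool) \<Rightarrow> (nat \<Rightarrow> nat \<Rightarrow> real) \<Rightarrow> bool" where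
  "weighted_graph n adj w \<longleftrightarrow>
     (\<forall>j k. adj j k \<longrightarrow> j < n \<and> k < n) \<and>
     (\<forall>j k. adj j k \<longrightarrow> adj k j) \<and>
     (\<forall>j. \<not> adj j j) \<and>
     (\<forall>j k. adj j k \<longrightarrow> w j k = w k j \<and> w j k > 0)"

definition connected_graph :: "nat \<Rightarrow> (nat \<Rightarrow> nat \<Rightarrow> bool) \<Rightarrow> bool" where
  "connected_graph n adj \<longleftrightarrow> n \<ge> 1 \<and> (\<forall>j k. j < n \<longrightarrow> k < n \<longrightarrow> adj\<^sup>*\<^sup>* j k)"

definition adjacency_matrix :: "nat \<Rightarrow> (nat \<Rightarrow> nat \<Rightarrow> bool) \<Rightarrow> (nat \<Rightarrow> nat \<Rightarrow> real) \<Rightarrow> real mat" where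
  "adjacency_matrix n adj w = mat n n (\<lambda>(j,k). if adj j k then w j k else 0)"

definition laplacian_matrix :: "nat \<Rightarrow> (nat \<Rightarrow> nat \<Rightarrow> bool) \<Rightarrow> (nat \<Rightarrow> nat \<Rightarrow> real) \<Rightarrow> real mat" where
  "laplacian_matrix n adj w =
     mat_diag n (\<lambda>j. \<Sum>k<n. adjacency_matrix n adj w $$ (j,k)) - adjacency_matrix n adj w"

definition mat_exp :: "complex mat \<Rightarrow> complex mat" where
  "mat_exp A = mat (dim_row A) (dim_col A) (\<lambda>(i,j). \<Sum>k. (A ^\<^sub>m k) $$ (i,j) / of_nat (fact k))"

definition fidelity :: "real mat \<Rightarrow> nat \<Rightarrow> nat \<Rightarrow> real \<Rightarrow> real" where
  "fidelity H s r t = (cmod (mat_exp ((\<i> * complex_of_real t) \<cdot>\<^sub>m map_mat complex_of_real H) $$ (s,r)))\<^sup>2"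

end

theory Submission
  imports Defs "Jordan_Normal_Form.Determinant"
begin

text \<open>Diagonalising H, the (s,r) entry of exp(itH) is the sum over j of
  Q(j,s) Q(j,r) exp(i t \<lambda>_j). Columns s and r of Q are unit vectors, so by the equality case
  of Cauchy-Schwarz perfect transfer at t0 forces Q(j,r) exp(i t0 \<lambda>_j) = c Q(j,s) with
  |c| = 1. Hence p(t0 + h) = |\<Sum>_j a_j exp(i \<theta>_j)|^2 with weights a_j = Q(j,s)^2 summing to 1
  and \<theta>_j = h(\<lambda>_j - \<sigma>). Expanding the square gives \<Sum>_j \<Sum>_k a_j a_k cos(\<theta>_j - \<theta>_k), and
  cos x \<ge> 1 - x^2/2 together with the nonnegativity of the variance of \<theta> under the weights a
  yields the bound.\<close>

lemma pow_mat_diag: "mat_diag n d ^\<^sub>m k = mat_diag n (\<lambda>j. d j ^ k)"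
proof (induction k)
  case 0
  have "dim_row (mat_diag n d) = n" using mat_diag_dim by blast
  then show ?case by simp
qed (simp add: power_commutes)

lemma pow_mat_orthogonal_conj_diag:
  fixes P :: "'a::comm_ring_1 mat"
  assumes "P \<in> carrier_mat n n" and "P * transpose_mat P = 1\<^sub>m n" and "transpose_mat P * P = 1\<^sub>m n"
  shows "(transpose_mat P * mat_diag n d * P) ^\<^sub>m k = transpose_mat P * mat_diag n (\<lambda>j. d j ^ k) * P"
proof -
  have "similar_mat_wit (transpose_mat P * mat_diag n d * P) (mat_diag n d) (transpose_mat P) P"
    using assms by (intro similar_mat_witI) auto
  then show ?thesis by (simp add: similar_mat_wit_pow_id pow_mat_diag)
qed

lemma transpose_conj_diag_entry:
  fixes P :: "'a::comm_ring_1 mat"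
  assumes P: "P \<in> carrier_mat n n" and "a < n" and "b < n"
  shows "(transpose_mat P * mat_diag n g * P) $$ (a,b) = (\<Sum>j<n. P $$ (j,a) * g j * P $$ (j,b))"
proof -
  have "transpose_mat P * mat_diag n g * P = transpose_mat P * (mat_diag n g * P)"
    using P by (simp add: assoc_mult_mat[of _ n n _ n _ n])
  also have "mat_diag n g * P = mat n n (\<lambda>(i,j). g i * P $$ (i,j))"
    using P by (rule mat_diag_mult_left)
  finally show ?thesis using assms
    by (simp add: scalar_prod_def atLeast0LessThan mult.assoc)
qed

lemma orthogonal_col_sum_squares:
  fixes Q :: "real mat"
  assumes Q: "Q \<in> carrier_mat n n" and QQ: "transpose_mat Q * Q = 1\<^sub>m n" and s: "s < n"
  shows "(\<Sum>j<n. (Q $$ (j,s))\<^sup>2) = 1"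
proof -
  have "(transpose_mat Q * Q) $$ (s,s) = 1" using QQ s by simp
  then show ?thesis using Q s by (simp add: scalar_prod_def atLeast0LessThan power2_eq_square)
qed

lemma mat_exp_orthogonal_conj_diag_entry:
  fixes P :: "complex mat"
  assumes P: "P \<in> carrier_mat n n" and PP: "P * transpose_mat P = 1\<^sub>m n" "transpose_mat P * P = 1\<^sub>m n"
    and a: "a < n" and b: "b < n"
  shows "mat_exp (transpose_mat P * mat_diag n d * P) $$ (a,b) = (\<Sum>j<n. P $$ (j,a) * P $$ (j,b) * exp (d j))"
proof -
  have "mat_exp (transpose_mat P * mat_diag n d * P) $$ (a,b)
      = (\<Sum>k. (\<Sum>j<n. P $$ (j,a) * d j ^ k * P $$ (j,b)) / of_nat (fact k))"
    using P a b
    by (simp add: mat_exp_def pow_mat_orthogonal_conj_diag[OF P PP] transpose_conj_diag_entry[OF P a b])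
  also have "\<dots> = (\<Sum>k. \<Sum>j<n. (P $$ (j,a) * P $$ (j,b)) * (d j ^ k /\<^sub>R fact k))"
    by (simp add: sum_divide_distrib scaleR_conv_of_real divide_inverse mult_ac sum_distrib_left)
  also have "\<dots> = (\<Sum>j<n. \<Sum>k. (P $$ (j,a) * P $$ (j,b)) * (d j ^ k /\<^sub>R fact k))"
    by (rule suminf_sum) (intro summable_mult summable_exp_generic)
  also have "\<dots> = (\<Sum>j<n. P $$ (j,a) * P $$ (j,b) * exp (d j))"
    by (intro sum.cong refl) (simp only: exp_def suminf_mult[OF summable_exp_generic])
  finally show ?thesis .
qed

lemma orthogonal_map_of_real:
  fixes Q :: "real mat"
  assumes Q: "Q \<in> carrier_mat n n" and QQ: "transpose_mat Q * Q = 1\<^sub>m n"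
  defines "P \<equiv> map_mat complex_of_real Q"
  shows "P * transpose_mat P = 1\<^sub>m n" and "transpose_mat P * P = 1\<^sub>m n"
proof -
  have "Q * transpose_mat Q = 1\<^sub>m n"
    by (rule mat_mult_left_right_inverse[OF _ Q QQ]) (use Q in simp)
  moreover have "P * transpose_mat P = map_mat complex_of_real (Q * transpose_mat Q)"
    "transpose_mat P * P = map_mat complex_of_real (transpose_mat Q * Q)"
    unfolding P_def using Q by (simp_all add: of_real_hom.mat_hom_mult[of _ n n _ n] map_mat_transpose)
  ultimately show "P * transpose_mat P = 1\<^sub>m n" and "transpose_mat P * P = 1\<^sub>m n"
    using QQ by (simp_all add: of_real_hom.mat_hom_one)
qed

lemma smult_map_of_real_conj_diag:
  fixes Q :: "real mat" and c :: complex
  assumes Q: "Q \<in> carrier_mat n n"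
  defines "P \<equiv> map_mat complex_of_real Q"
  shows "c \<cdot>\<^sub>m map_mat complex_of_real (transpose_mat Q * mat_diag n lam * Q)
    = transpose_mat P * mat_diag n (\<lambda>j. c * complex_of_real (lam j)) * P"
proof -
  let ?D = "mat_diag n (\<lambda>j. complex_of_real (lam j))"
  have P: "P \<in> carrier_mat n n" using Q by (simp add: P_def)
  have "map_mat complex_of_real (mat_diag n lam) = ?D"
    by (rule eq_matI) (auto simp: mat_diag_def)
  then have "map_mat complex_of_real (transpose_mat Q * mat_diag n lam * Q) = transpose_mat P * ?D * P"
    using Q by (simp add: P_def of_real_hom.mat_hom_mult[of _ n n _ n] map_mat_transpose)
  also have "c \<cdot>\<^sub>m (transpose_mat P * ?D * P) = (c \<cdot>\<^sub>m (transpose_mat P * ?D)) * P"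
    using P by (simp add: mult_smult_assoc_mat[of _ n n _ n])
  also have "c \<cdot>\<^sub>m (transpose_mat P * ?D) = transpose_mat P * (c \<cdot>\<^sub>m ?D)"
    using P by (simp add: mult_smult_distrib[of _ n n _ n])
  also have "c \<cdot>\<^sub>m ?D = mat_diag n (\<lambda>j. c * complex_of_real (lam j))"
    by (rule eq_matI) (auto simp: mat_diag_def)
  finally show ?thesis .
qed

lemma mat_exp_orthogonal_diag_entry:
  fixes Q :: "real mat"
  assumes Q: "Q \<in> carrier_mat n n" and QQ: "transpose_mat Q * Q = 1\<^sub>m n"
    and a: "a < n" and b: "b < n"
  shows "mat_exp ((\<i> * complex_of_real t) \<cdot>\<^sub>m map_mat complex_of_real (transpose_mat Q * mat_diag n lam * Q)) $$ (a,b)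
     = (\<Sum>j<n. complex_of_real (Q $$ (j,a) * Q $$ (j,b)) * exp (\<i> * complex_of_real (t * lam j)))"
  using Q a b
  by (simp add: smult_map_of_real_conj_diag[OF Q] mat_exp_orthogonal_conj_diag_entry
      orthogonal_map_of_real[OF Q QQ] mult.assoc)

lemma cos_ge_one_minus_square_half: "1 - x\<^sup>2 / 2 \<le> cos (x::real)"
proof -
  have "(sin (x/2))\<^sup>2 \<le> (x/2)\<^sup>2"
    using abs_sin_x_le_abs_x[of "x/2"] by (metis abs_ge_zero power2_abs power_mono)
  moreover have "cos x = 1 - 2 * (sin (x/2))\<^sup>2"
    using cos_double_sin[of "x/2"] by simp
  ultimately show ?thesis by (simp add: power2_eq_square)
qed

lemma norm_convex_sum_cis_squared_ge:
  fixes a \<theta> :: "nat \<Rightarrow> real"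
  assumes a: "\<And>j. a j \<ge> 0" and a_sum: "(\<Sum>j<n. a j) = 1"
  shows "1 - (\<Sum>j<n. a j * (\<theta> j)\<^sup>2) \<le> (cmod (\<Sum>j<n. complex_of_real (a j) * cis (\<theta> j)))\<^sup>2"
proof -
  let ?Y = "\<Sum>j<n. complex_of_real (a j) * cis (\<theta> j)"
  have "complex_of_real ((cmod ?Y)\<^sup>2) = ?Y * cnj ?Y" by (rule complex_norm_square)
  also have "\<dots> = (\<Sum>j<n. \<Sum>k<n. complex_of_real (a j * a k) * cis (\<theta> j - \<theta> k))"
    by (simp add: cnj_sum sum_product cis_divide[symmetric] cis_cnj mult_ac divide_inverse)
  finally have "(cmod ?Y)\<^sup>2 = Re (\<Sum>j<n. \<Sum>k<n. complex_of_real (a j * a k) * cis (\<theta> j - \<theta> k))"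
    by (metis Re_complex_of_real)
  also have "\<dots> = (\<Sum>j<n. \<Sum>k<n. a j * a k * cos (\<theta> j - \<theta> k))"
    by (simp add: Re_sum)
  also have "\<dots> \<ge> (\<Sum>j<n. \<Sum>k<n. a j * a k * (1 - (\<theta> j - \<theta> k)\<^sup>2 / 2))"
    by (intro sum_mono mult_left_mono cos_ge_one_minus_square_half) (simp add: a)
  finally have "(cmod ?Y)\<^sup>2 \<ge> (\<Sum>j<n. \<Sum>k<n. a j * a k * (1 - (\<theta> j - \<theta> k)\<^sup>2 / 2))" .
  also have "(\<Sum>j<n. \<Sum>k<n. a j * a k * (1 - (\<theta> j - \<theta> k)\<^sup>2 / 2))
      = (\<Sum>j<n. \<Sum>k<n. a j * a k - (a j * (\<theta> j)\<^sup>2) * a k / 2 - a j * (a k * (\<theta> k)\<^sup>2) / 2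
          + (a j * \<theta> j) * (a k * \<theta> k))"
    by (intro sum.cong refl) (simp add: power2_eq_square field_simps)
  also have "\<dots> = (\<Sum>j<n. a j) * (\<Sum>k<n. a k) - (\<Sum>j<n. a j * (\<theta> j)\<^sup>2) * (\<Sum>k<n. a k) / 2
      - (\<Sum>j<n. a j) * (\<Sum>k<n. a k * (\<theta> k)\<^sup>2) / 2 + (\<Sum>j<n. a j * \<theta> j) * (\<Sum>k<n. a k * \<theta> k)"
    by (simp add: sum.distrib sum_subtractf sum_product sum_divide_distrib)
  also have "\<dots> = 1 - (\<Sum>j<n. a j * (\<theta> j)\<^sup>2) + (\<Sum>j<n. a j * \<theta> j)\<^sup>2"
    using a_sum by (simp add: power2_eq_square)
  finally show ?thesis
    using zero_le_power2[of "\<Sum>j<n. a j * \<theta> j"] by linarith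
qed

lemma unit_inner_norm_one_imp_proportional:
  fixes u :: "nat \<Rightarrow> real" and z :: "nat \<Rightarrow> complex"
  assumes u: "(\<Sum>j<n. (u j)\<^sup>2) = 1" and z: "(\<Sum>j<n. (cmod (z j))\<^sup>2) = 1"
    and inner: "cmod (\<Sum>j<n. complex_of_real (u j) * z j) = 1"
  defines "S \<equiv> \<Sum>j<n. complex_of_real (u j) * z j"
  shows "j < n \<Longrightarrow> z j = S * complex_of_real (u j)"
proof -
  have SS: "S * cnj S = 1"
    using complex_norm_square[of S] inner by (simp add: S_def)
  have "complex_of_real (\<Sum>j<n. (cmod (z j - S * complex_of_real (u j)))\<^sup>2)
      = (\<Sum>j<n. (z j - S * complex_of_real (u j)) * cnj (z j - S * complex_of_real (u j)))"
    by (simp only: of_real_sum complex_norm_square)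
  also have "\<dots> = (\<Sum>j<n. complex_of_real ((cmod (z j))\<^sup>2) - cnj S * (complex_of_real (u j) * z j)
      - S * cnj (complex_of_real (u j) * z j) + S * cnj S * complex_of_real ((u j)\<^sup>2))"
    using complex_norm_square by (intro sum.cong refl) (simp add: algebra_simps power2_eq_square)
  also have "\<dots> = complex_of_real (\<Sum>j<n. (cmod (z j))\<^sup>2) - cnj S * S - S * cnj S
      + S * cnj S * complex_of_real (\<Sum>j<n. (u j)\<^sup>2)"
    by (simp add: sum.distrib sum_subtractf sum_distrib_left S_def cnj_sum)
  also have "\<dots> = 0" using u z SS by (simp add: mult.commute)
  finally have "(\<Sum>j<n. (cmod (z j - S * complex_of_real (u j)))\<^sup>2) = 0"
    by (simp only: of_real_eq_0_iff)
  then show "j < n \<Longrightarrow> z j = S * complex_of_real (u j)"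
    by (subst (asm) sum_nonneg_eq_0_iff) auto
qed

lemma perfect_transfer_fidelity_ge:
  fixes u v lam :: "nat \<Rightarrow> real"
  assumes u: "(\<Sum>j<n. (u j)\<^sup>2) = 1" and v: "(\<Sum>j<n. (v j)\<^sup>2) = 1"
    and pst: "cmod (\<Sum>j<n. complex_of_real (u j * v j) * exp (\<i> * complex_of_real (t0 * lam j))) = 1"
  shows "1 - h\<^sup>2 * (\<Sum>j<n. (u j)\<^sup>2 * (lam j - \<sigma>)\<^sup>2)
    \<le> (cmod (\<Sum>j<n. complex_of_real (u j * v j) * exp (\<i> * complex_of_real ((t0 + h) * lam j))))\<^sup>2"
proof -
  define z where "z j = complex_of_real (v j) * cis (t0 * lam j)" for j
  define S where "S = (\<Sum>j<n. complex_of_real (u j) * z j)"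
  have inner: "cmod S = 1"
    using pst by (simp add: S_def z_def cis_conv_exp mult.assoc)
  have "(\<Sum>j<n. (cmod (z j))\<^sup>2) = 1"
    using v by (simp add: z_def norm_mult)
  with u inner have z_eq: "z j = S * complex_of_real (u j)" if "j < n" for j
    using unit_inner_norm_one_imp_proportional that unfolding S_def by blast
  have "(\<Sum>j<n. complex_of_real (u j * v j) * exp (\<i> * complex_of_real ((t0 + h) * lam j)))
      = (\<Sum>j<n. complex_of_real (u j) * z j * cis (h * lam j))"
  proof (intro sum.cong refl)
    fix j
    have "exp (\<i> * complex_of_real ((t0 + h) * lam j)) = cis (t0 * lam j) * cis (h * lam j)"
      by (simp only: cis_conv_exp[symmetric] cis_mult distrib_right)
    then show "complex_of_real (u j * v j) * exp (\<i> * complex_of_real ((t0 + h) * lam j))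
        = complex_of_real (u j) * z j * cis (h * lam j)"
      by (simp add: z_def mult_ac)
  qed
  also have "\<dots> = S * cis (h * \<sigma>) * (\<Sum>j<n. complex_of_real ((u j)\<^sup>2) * cis (h * (lam j - \<sigma>)))"
    by (simp add: sum_distrib_left z_eq cis_mult power2_eq_square right_diff_distrib mult_ac)
  finally have "cmod (\<Sum>j<n. complex_of_real (u j * v j) * exp (\<i> * complex_of_real ((t0 + h) * lam j)))
      = cmod (\<Sum>j<n. complex_of_real ((u j)\<^sup>2) * cis (h * (lam j - \<sigma>)))"
    using inner by (simp add: norm_mult)
  moreover have "(\<Sum>j<n. (u j)\<^sup>2 * (h * (lam j - \<sigma>))\<^sup>2) = h\<^sup>2 * (\<Sum>j<n. (u j)\<^sup>2 * (lam j - \<sigma>)\<^sup>2)"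
    by (simp add: sum_distrib_left power_mult_distrib mult_ac)
  ultimately show ?thesis
    using norm_convex_sum_cis_squared_ge[of "\<lambda>j. (u j)\<^sup>2" n "\<lambda>j. h * (lam j - \<sigma>)"] u by simp
qed

theorem theorem2p2:
  fixes n :: nat and adj :: "nat \<Rightarrow> nat \<Rightarrow> bool" and w :: "nat \<Rightarrow> nat \<Rightarrow> real"
    and H Q :: "real mat" and lam :: "nat \<Rightarrow> real"
    and s r :: nat and t0 h \<sigma> :: real
  assumes "weighted_graph n adj w" and "connected_graph n adj"
    and "H = adjacency_matrix n adj w \<or> H = laplacian_matrix n adj w"
    and "Q \<in> carrier_mat n n" and "transpose_mat Q * Q = 1\<^sub>m n"
    and "H = transpose_mat Q * mat_diag n lam * Q"
    and "\<forall>j k. j \<le> k \<longrightarrow> k < n \<longrightarrow> lam j \<le> lam k"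
    and "s < n" and "r < n"
    and "fidelity H s r t0 = 1"
    and "\<bar>h\<bar> * (lam (n - 1) - lam 0) < pi"
  shows "fidelity H s r (t0 + h) \<ge> 1 - h\<^sup>2 * (\<Sum>j<n. (Q $$ (j,s))\<^sup>2 * (lam j - \<sigma>)\<^sup>2)"
proof -
  note Q = assms(4,5) and H = assms(6)
  let ?amp = "\<lambda>t. \<Sum>j<n. complex_of_real (Q $$ (j,s) * Q $$ (j,r)) * exp (\<i> * complex_of_real (t * lam j))"
  have fidelity_eq: "fidelity H s r t = (cmod (?amp t))\<^sup>2" for t
    unfolding fidelity_def H mat_exp_orthogonal_diag_entry[OF Q assms(8,9)] ..
  have "(cmod (?amp t0))\<^sup>2 = 1\<^sup>2"
    using assms(10) by (simp only: fidelity_eq power_one)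
  then have "cmod (?amp t0) = 1"
    by (rule power2_eq_imp_eq) simp_all
  then show ?thesis
    unfolding fidelity_eq
    by (rule perfect_transfer_fidelity_ge[OF orthogonal_col_sum_squares[OF Q assms(8)]
          orthogonal_col_sum_squares[OF Q assms(9)]])
qed

end
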